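(* Let $q=p-1$, $\lambda>\lambda_1(\Omega_0)$, and let $v_0\in W^{s,p}_0(\Omega_0)\cap L^\infty(\Omega_0)$ be nonnegative, nontrivial, with $E_{\Omega_0}(v_0)<0$. Let $v$ be a weak solution of $(\mathbb P_0)$ with $v(0)=v_0$ satisfying the energy inequality $\int_0^t\!\int_{\Omega_0}|\partial_tv|^2+E_{\Omega_0}(v(t))\le E_{\Omega_0}(v_0)$. If $p\le2$, then $\|v(t)\|_{L^2(\Omega_0)}\to\infty$ as $t\to\infty$. If $p>2$, then the maximal existence time of $v$ is finite.
   Context: Setting: $\Omega_0\subset\mathbb R^d$, $d\ge2$, a bounded $C^{1,1}$ open set; $s\in(0,1)$, $p\in(1,\infty)$; $\langle(-\Delta)^s_pu,\phi\rangle=\int_{\mathbb R^{2d}}\frac{|u(x)-u(y)|^{p-2}(u(x)-u(y))(\phi(x)-\phi(y))}{|x-y|^{d+sp}}$; $W^{s,p}_0(\Omega_0)$ = functions in $L^p(\mathbb R^d)$ vanishing off $\Omega_0$ with finite norm $\|u\|^p_{W^{s,p}_0(\Omega_0)}=\int_{\mathbb R^{2d}}\frac{|u(x)-u(y)|^p}{|x-y|^{d+sp}}$; $\lambda_1(\Omega_0)=\inf_{v\ne0}\|v\|^p_{W^{s,p}_0(\Omega_0)}/\|v\|^p_{L^p(\Omega_0)}$. Problem $(\mathbb P_0)$: $\partial_tv+(-\Delta)^s_pv=\lambda v^q$ in $(0,T)\times\Omega_0$, $v=0$ off $\Omega_0$, $v\ge0$, $v(0)=v_0$, with weak solutions defined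 as nonnegative $v\in L^\infty\cap L^\infty(0,T;W^{s,p}_0(\Omega_0))$, $\partial_tv\in L^2$, satisfying the equation tested against $\phi\in L^1(0,T;W^{s,p}_0(\Omega_0))\cap L^2$. $E_{\Omega_0}(v)=\frac1p\|v\|^p_{W^{s,p}_0(\Omega_0)}-\frac{\lambda}{q+1}\|v\|^{q+1}_{L^{q+1}(\Omega_0)}$. *)

theory Defs
  imports "HOL-Analysis.Analysis"
begin

text \<open>Bounded C^{1,1} open set: open, bounded, and near every boundary point it is
  locally the strict epigraph of a C^{1,1} function over a hyperplane (direction e).\<close>
definition C11_domain :: "'a::euclidean_space set \<Rightarrow> bool" where
  "C11_domain \<Omega> \<longleftrightarrow> open \<Omega> \<and> bounded \<Omega> \<and>
    (\<forall>x0\<in>frontier \<Omega>. \<exists>(e::'a) (r::real) (g::'a \<Rightarrow> real) (G::'a \<Rightarrow> 'a) (L::real).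
        norm e = 1 \<and> r > 0 \<and>
        (\<forall>z. (g has_derivative (\<lambda>h. G z \<bullet> h)) (at z)) \<and>
        (\<forall>z z'. norm (G z - G z') \<le> L * norm (z - z')) \<and>
        \<Omega> \<inter> ball x0 r = {x \<in> ball x0 r. g (x - (x \<bullet> e) *\<^sub>R e) < x \<bullet> e})"

definition gagliardo :: "real \<Rightarrow> real \<Rightarrow> ('a::euclidean_space \<Rightarrow> real) \<Rightarrow> ennreal" where
  "gagliardo s p u = (\<integral>\<^sup>+ z. ennreal (\<bar>u (fst z) - u (snd z)\<bar> powr p /
        norm (fst z - snd z) powr (real DIM('a) + s * p)) \<partial>(lborel \<Otimes>\<^sub>M lborel))"

definition W0 :: "real \<Rightarrow> real \<Rightarrow> 'a::euclidean_space set \<Rightarrow> ('a \<Rightarrow> real) set" where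
  "W0 s p \<Omega> = {u. u \<in> borel_measurable lborel \<and> (AE x in lborel. x \<notin> \<Omega> \<longrightarrow> u x = 0) \<and>
      integrable lborel (\<lambda>x. \<bar>u x\<bar> powr p) \<and> gagliardo s p u < \<infinity>}"

definition Wnorm_pow :: "real \<Rightarrow> real \<Rightarrow> ('a::euclidean_space \<Rightarrow> real) \<Rightarrow> real" where
  "Wnorm_pow s p u = enn2real (gagliardo s p u)"

definition Lnorm_pow :: "real \<Rightarrow> 'a::euclidean_space set \<Rightarrow> ('a \<Rightarrow> real) \<Rightarrow> real" where
  "Lnorm_pow r \<Omega> u = (\<integral>x\<in>\<Omega>. \<bar>u x\<bar> powr r \<partial>lborel)"

definition lambda1 :: "real \<Rightarrow> real \<Rightarrow> 'a::euclidean_space set \<Rightarrow> real" where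
  "lambda1 s p \<Omega> = Inf {Wnorm_pow s p v / Lnorm_pow p \<Omega> v | v. v \<in> W0 s p \<Omega> \<and> Lnorm_pow p \<Omega> v \<noteq> 0}"

definition energy :: "real \<Rightarrow> real \<Rightarrow> real \<Rightarrow> real \<Rightarrow> 'a::euclidean_space set \<Rightarrow> ('a \<Rightarrow> real) \<Rightarrow> real" where
  "energy s p lam q \<Omega> v = Wnorm_pow s p v / p - lam / (q + 1) * Lnorm_pow (q + 1) \<Omega> v"

definition pLap_pair :: "real \<Rightarrow> real \<Rightarrow> ('a::euclidean_space \<Rightarrow> real) \<Rightarrow> ('a \<Rightarrow> real) \<Rightarrow> real" where
  "pLap_pair s p u \<phi> = (\<integral> z. \<bar>u (fst z) - u (snd z)\<bar> powr (p - 2) * (u (fst z) - u (snd z)) *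
        (\<phi> (fst z) - \<phi> (snd z)) / norm (fst z - snd z) powr (real DIM('a) + s * p)
        \<partial>(lborel \<Otimes>\<^sub>M lborel))"

definition test_fun :: "real \<Rightarrow> real \<Rightarrow> 'a::euclidean_space set \<Rightarrow> real \<Rightarrow> (real \<Rightarrow> 'a \<Rightarrow> real) \<Rightarrow> bool" where
  "test_fun s p \<Omega> T \<phi> \<longleftrightarrow>
     (\<lambda>z. \<phi> (fst z) (snd z)) \<in> borel_measurable (lborel \<Otimes>\<^sub>M lborel) \<and>
     (AE t in lborel. t \<in> {0<..<T} \<longrightarrow> \<phi> t \<in> W0 s p \<Omega>) \<and>
     (\<integral>\<^sup>+ t\<in>{0<..<T}. ennreal (Wnorm_pow s p (\<phi> t) powr (1 / p)) \<partial>lborel) < \<infinity> \<and>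
     (\<integral>\<^sup>+ z\<in>{0<..<T} \<times> \<Omega>. ennreal ((\<phi> (fst z) (snd z))\<^sup>2) \<partial>(lborel \<Otimes>\<^sub>M lborel)) < \<infinity>"

text \<open>v is a weak solution of (P_0) on (0,T) with initial datum v0, w being its time
  derivative \<partial>_t v \<in> L^2((0,T)\<times>\<Omega>) (v(t) = v0 + \<integral>_0^t w, which encodes both the weak
  time derivative and v(0) = v0).\<close>
definition weak_sol ::
  "real \<Rightarrow> real \<Rightarrow> real \<Rightarrow> real \<Rightarrow> 'a::euclidean_space set \<Rightarrow> real \<Rightarrow>
     ('a \<Rightarrow> real) \<Rightarrow> (real \<Rightarrow> 'a \<Rightarrow> real) \<Rightarrow> (real \<Rightarrow> 'a \<Rightarrow> real) \<Rightarrow> bool" where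
  "weak_sol s p lam q \<Omega> T v0 v w \<longleftrightarrow>
     (\<lambda>z. v (fst z) (snd z)) \<in> borel_measurable (lborel \<Otimes>\<^sub>M lborel) \<and>
     (\<lambda>z. w (fst z) (snd z)) \<in> borel_measurable (lborel \<Otimes>\<^sub>M lborel) \<and>
     (\<forall>t\<in>{0..<T}. AE x in lborel. v t x \<ge> 0) \<and>
     (\<exists>M. AE t in lborel. t \<in> {0<..<T} \<longrightarrow> (AE x in lborel. \<bar>v t x\<bar> \<le> M)) \<and>
     (AE t in lborel. t \<in> {0<..<T} \<longrightarrow> v t \<in> W0 s p \<Omega>) \<and>
     (\<exists>K. AE t in lborel. t \<in> {0<..<T} \<longrightarrow> Wnorm_pow s p (v t) \<le> K) \<and>
     (\<integral>\<^sup>+ z\<in>{0<..<T} \<times> \<Omega>. ennreal ((w (fst z) (snd z))\<^sup>2) \<partial>(lborel \<Otimes>\<^sub>M lborel)) < \<infinity> \<and>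
     (\<forall>t\<in>{0..<T}. AE x in lborel. x \<in> \<Omega> \<longrightarrow>
         v t x = v0 x + (LBINT \<tau>=0..t. w \<tau> x)) \<and>
     (\<forall>\<phi>. test_fun s p \<Omega> T \<phi> \<longrightarrow>
        (\<integral>z\<in>{0<..<T} \<times> \<Omega>. w (fst z) (snd z) * \<phi> (fst z) (snd z) \<partial>(lborel \<Otimes>\<^sub>M lborel))
        + (LBINT t=0..T. pLap_pair s p (v t) (\<phi> t))
        = lam * (\<integral>z\<in>{0<..<T} \<times> \<Omega>. v (fst z) (snd z) powr q * \<phi> (fst z) (snd z)
                    \<partial>(lborel \<Otimes>\<^sub>M lborel)))"

definition energy_ineq ::
  "real \<Rightarrow> real \<Rightarrow> real \<Rightarrow> real \<Rightarrow> 'a::euclidean_space set \<Rightarrow> real \<Rightarrow>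
     ('a \<Rightarrow> real) \<Rightarrow> (real \<Rightarrow> 'a \<Rightarrow> real) \<Rightarrow> (real \<Rightarrow> 'a \<Rightarrow> real) \<Rightarrow> bool" where
  "energy_ineq s p lam q \<Omega> T v0 v w \<longleftrightarrow>
     (\<forall>t\<in>{0..<T}.
        (\<integral>z\<in>{0<..<t} \<times> \<Omega>. (w (fst z) (snd z))\<^sup>2 \<partial>(lborel \<Otimes>\<^sub>M lborel))
        + energy s p lam q \<Omega> (v t) \<le> energy s p lam q \<Omega> v0)"

definition global_sol ::
  "real \<Rightarrow> real \<Rightarrow> real \<Rightarrow> real \<Rightarrow> 'a::euclidean_space set \<Rightarrow>
     ('a \<Rightarrow> real) \<Rightarrow> (real \<Rightarrow> 'a \<Rightarrow> real) \<Rightarrow> bool" where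
  "global_sol s p lam q \<Omega> v0 v \<longleftrightarrow>
     (\<exists>w. \<forall>T>0. weak_sol s p lam q \<Omega> T v0 v w \<and> energy_ineq s p lam q \<Omega> T v0 v w)"

end

theory Submission
  imports Defs
begin

text \<open>
  Testing the equation with the solution itself and using the chain rule for t \<mapsto> |v(t)|^2
  gives y' = -2p E(v) for the L^2 mass y(t) = |v(t)|^2, because q + 1 = p.
  By the energy inequality -p E(v(t)) \<ge> p H(t) - p E(v0), where H(t) is the dissipation
  \<integral> |\<partial>v/\<partial>t|^2 over (0,t) \<times> \<Omega> and -p E(v0) > 0; so y grows at least linearly, which
  settles p \<le> 2. For p > 2, Cauchy-Schwarz gives (y(t) - y(0))^2 \<le> 4 H(t) M(t) with
  M(t) = \<integral> y over (0,t), hence M M'' \<ge> (p/2) (M' - M'(0))^2. Levine's concavity argument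
  turns this into M' \<ge> k M^\<beta> with \<beta> > 1 for all large t, which is impossible on an unbounded
  time interval.
\<close>

section \<open>Levine's concavity argument\<close>

lemma sq_le_mult_of_Young_family:
  fixes a h m :: real
  assumes "0 < a" "0 < m" and Young: "\<And>e. 0 < e \<Longrightarrow> a \<le> e * h + m / (4 * e)"
  shows "a\<^sup>2 \<le> h * m"
proof -
  have "a \<le> m / (2 * a) * h + a / 2"
    using Young[of "m / (2 * a)"] assms(1,2) by (simp add: field_simps)
  then show ?thesis
    using assms(1,2) by (simp add: field_simps power2_eq_square)
qed

lemma ratio_powr_nondecreasing:
  fixes R M R' M' :: "real \<Rightarrow> real"
  assumes "t0 \<le> t" and cont: "continuous_on {t0..t} R" "continuous_on {t0..t} M"
    and pos: "\<And>x. t0 \<le> x \<Longrightarrow> x \<le> t \<Longrightarrow> 0 < R x \<and> 0 < M x"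
    and deriv: "\<And>x. t0 < x \<Longrightarrow> x < t \<Longrightarrow>
      (R has_real_derivative R' x) (at x) \<and> (M has_real_derivative M' x) (at x)"
    and growth: "\<And>x. t0 < x \<Longrightarrow> x < t \<Longrightarrow> \<beta> * M' x * R x \<le> R' x * M x"
  shows "R t0 / M t0 powr \<beta> \<le> R t / M t powr \<beta>"
proof -
  define Q where "Q x = ln (R x) - \<beta> * ln (M x)" for x
  have "Q t0 \<le> Q t"
  proof (rule DERIV_nonneg_imp_increasing_open[OF assms(1)])
    fix x assume x: "t0 < x" "x < t"
    have R: "0 < R x" and M: "0 < M x" using pos x by auto
    have "(Q has_real_derivative R' x / R x - \<beta> * (M' x / M x)) (at x)"
      unfolding Q_def using deriv[OF x] R M by (auto intro!: derivative_eq_intros)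
    moreover have "0 \<le> R' x / R x - \<beta> * (M' x / M x)"
      using growth[OF x] R M by (simp add: field_simps)
    ultimately show "\<exists>d. (Q has_real_derivative d) (at x) \<and> 0 \<le> d" by blast
  next
    show "continuous_on {t0..t} Q"
      unfolding Q_def using cont by (intro continuous_intros) (use pos in fastforce)+
  qed
  moreover have "0 < R t0" "0 < M t0" "0 < R t" "0 < M t"
    using pos assms(1) by auto
  ultimately have "ln (R t0 / M t0 powr \<beta>) \<le> ln (R t / M t powr \<beta>)"
    by (simp add: Q_def ln_div)
  moreover have "0 < R t0 / M t0 powr \<beta>" "0 < R t / M t powr \<beta>"
    using \<open>0 < R t0\<close> \<open>0 < R t\<close> \<open>0 < M t0\<close> \<open>0 < M t\<close> by simp_all
  ultimately show ?thesis
    by simp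
qed

(* M powr (1 - beta) would decrease at rate at least (beta - 1) k while staying positive. *)
lemma superlinear_growth_no_global_solution:
  fixes M M' :: "real \<Rightarrow> real"
  assumes "1 < \<beta>" "0 < k"
    and deriv: "\<And>t. t0 \<le> t \<Longrightarrow> (M has_real_derivative M' t) (at t)"
    and pos: "\<And>t. t0 \<le> t \<Longrightarrow> 0 < M t"
    and growth: "\<And>t. t0 \<le> t \<Longrightarrow> k * M t powr \<beta> \<le> M' t"
  shows False
proof -
  define P where "P t = M t powr (1 - \<beta>) + (\<beta> - 1) * k * (t - t0)" for t
  define t where "t = t0 + M t0 powr (1 - \<beta>) / ((\<beta> - 1) * k)"
  have "t0 \<le> t"
    using assms(1,2) by (simp add: t_def)
  have "P t \<le> P t0"
  proof (rule DERIV_nonpos_imp_nonincreasing[OF \<open>t0 \<le> t\<close>])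
    fix x assume x: "t0 \<le> x" "x \<le> t"
    have M: "0 < M x" using pos x by simp
    have "((\<lambda>t. M t powr (1 - \<beta>)) has_real_derivative
        (1 - \<beta>) * M x powr (1 - \<beta> - of_nat 1) * M' x) (at x)"
      by (rule DERIV_fun_powr[OF deriv[OF x(1)] M])
    moreover have "((\<lambda>t. (\<beta> - 1) * k * (t - t0)) has_real_derivative (\<beta> - 1) * k) (at x)"
      by (auto intro!: derivative_eq_intros)
    ultimately have "(P has_real_derivative (1 - \<beta>) * M x powr (- \<beta>) * M' x + (\<beta> - 1) * k) (at x)"
      unfolding P_def using DERIV_add by fastforce
    moreover have "k \<le> M x powr (- \<beta>) * M' x"
      using mult_left_mono[OF growth[OF x(1)], of "M x powr (- \<beta>)"] M
      by (simp add: powr_minus field_simps)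
    then have "(\<beta> - 1) * k \<le> (\<beta> - 1) * (M x powr (- \<beta>) * M' x)"
      using assms(1) by (intro mult_left_mono) auto
    then have "(1 - \<beta>) * M x powr (- \<beta>) * M' x + (\<beta> - 1) * k \<le> 0"
      by (simp add: algebra_simps)
    ultimately show "\<exists>d. (P has_real_derivative d) (at x) \<and> d \<le> 0" by blast
  qed
  moreover have "P t = M t powr (1 - \<beta>) + M t0 powr (1 - \<beta>)"
    using assms(1,2) by (simp add: P_def t_def)
  moreover have "0 < M t powr (1 - \<beta>)"
    using pos[OF \<open>t0 \<le> t\<close>] by simp
  ultimately show False
    by (simp add: P_def)
qed

locale primitive_of =
  fixes g y :: "real \<Rightarrow> real" and y0 :: real
  assumes integrable_g: "\<And>t. 0 \<le> t \<Longrightarrow> g integrable_on {0..t}"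
    and y_eq: "\<And>t. 0 \<le> t \<Longrightarrow> y t = y0 + 2 * integral {0..t} g"
begin

lemma continuous_on_primitive:
  assumes "0 \<le> s"
  shows "continuous_on {s..t} y"
proof (cases "0 \<le> t")
  case True
  have "continuous_on {0..t} (\<lambda>t. y0 + 2 * integral {0..t} g)"
    by (intro continuous_intros indefinite_integral_continuous_1 integrable_g True)
  then have "continuous_on {0..t} y"
    by (rule continuous_on_eq) (auto simp: y_eq)
  then show ?thesis
    by (rule continuous_on_subset) (use assms in auto)
qed (use assms in simp)

lemma integral_primitive_has_derivative:
  assumes "0 < t"
  shows "((\<lambda>t. integral {0..t} y) has_real_derivative y t) (at t)"
proof -
  have "((\<lambda>t. integral {0..t} y) has_real_derivative y t) (at t within {0..t + 1})"
    using assms by (intro integral_has_real_derivative continuous_on_primitive) auto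
  moreover have "t \<in> interior {0..t + 1}"
    using assms by simp
  ultimately show ?thesis
    by (metis at_within_interior)
qed

lemma continuous_on_integral_primitive:
  assumes "0 \<le> s"
  shows "continuous_on {s..t} (\<lambda>\<tau>. integral {0..\<tau>} y)"
proof -
  have "continuous_on {0..t} (\<lambda>\<tau>. integral {0..\<tau>} y)"
    by (intro indefinite_integral_continuous_1 integrable_continuous_real continuous_on_primitive) simp
  then show ?thesis
    by (rule continuous_on_subset) (use assms in auto)
qed

lemma primitive_increment_ge:
  assumes "0 \<le> s" "s \<le> t" and f_le: "\<And>\<tau>. s \<le> \<tau> \<Longrightarrow> \<tau> \<le> t \<Longrightarrow> f \<tau> \<le> g \<tau>"
    and "f integrable_on {s..t}"
  shows "2 * integral {s..t} f \<le> y t - y s"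
proof -
  have "integral {0..t} g = integral {0..s} g + integral {s..t} g"
    using Henstock_Kurzweil_Integration.integral_combine[OF assms(1,2) integrable_g] assms(1,2)
    by simp
  moreover have "integral {s..t} f \<le> integral {s..t} g"
    using integrable_subinterval_real[OF integrable_g[of t]] assms
    by (intro integral_le) auto
  ultimately show ?thesis
    using y_eq[of s] y_eq[of t] assms(1,2) by simp
qed

end

locale linearly_growing_primitive = primitive_of +
  fixes c :: real
  assumes g_ge_c: "\<And>t. 0 \<le> t \<Longrightarrow> c \<le> g t" and c_pos: "0 < c" and y0_nonneg: "0 \<le> y0"
begin

lemma primitive_ge_linear:
  assumes "0 \<le> t"
  shows "y0 + 2 * c * t \<le> y t"
proof -
  have "2 * integral {0..t} (\<lambda>_. c) \<le> y t - y 0"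
    by (rule primitive_increment_ge) (use assms g_ge_c in auto)
  then show ?thesis
    using assms y_eq[of 0] by (simp add: algebra_simps)
qed

lemma primitive_minus_initial_pos:
  assumes "0 < t"
  shows "0 < y t - y0"
proof -
  have "0 < 2 * c * t"
    using c_pos assms by simp
  then show ?thesis
    using primitive_ge_linear[of t] assms by simp
qed

lemma primitive_nonneg: "0 \<le> t \<Longrightarrow> 0 \<le> y t"
  using primitive_minus_initial_pos[of t] y0_nonneg y_eq[of 0] by (cases "t = 0") auto

lemma integral_primitive_pos:
  assumes "0 < t"
  shows "0 < integral {0..t} y"
proof -
  have y_int: "y integrable_on {a..b}" if "0 \<le> a" for a b
    by (intro integrable_continuous_real continuous_on_primitive that)
  have "integral {0..t} y = integral {0..t / 2} y + integral {t / 2..t} y"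
    using Henstock_Kurzweil_Integration.integral_combine[of 0 "t / 2" t y] y_int assms
    by simp
  moreover have "0 \<le> integral {0..t / 2} y"
    using y_int primitive_nonneg by (intro integral_nonneg) auto
  moreover have "integral {t / 2..t} (\<lambda>_. c * t) \<le> integral {t / 2..t} y"
  proof (intro integral_le y_int)
    fix \<tau> assume "\<tau> \<in> {t / 2..t}"
    then have "c * t \<le> 2 * c * \<tau>"
      using c_pos mult_left_mono[of t "2 * \<tau>" c] by simp
    then show "c * t \<le> y \<tau>"
      using primitive_ge_linear[of \<tau>] y0_nonneg \<open>\<tau> \<in> {t / 2..t}\<close> assms by simp
  qed (use assms in auto)
  moreover have "0 < integral {t / 2..t} (\<lambda>_. c * t)"
    using c_pos assms by simp
  ultimately show ?thesis
    by linarith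
qed

lemma continuous_on_Levine_quotient:
  assumes "0 < s"
  shows "continuous_on {s..t} (\<lambda>\<tau>. (y \<tau> - y0)\<^sup>2 / integral {0..\<tau>} y)"
proof -
  have "integral {0..\<tau>} y \<noteq> 0" if "\<tau> \<in> {s..t}" for \<tau>
    using integral_primitive_pos[of \<tau>] that assms by auto
  then show ?thesis
    using continuous_on_primitive[of s t] continuous_on_integral_primitive[of s t] assms
    by (intro continuous_intros) auto
qed

(* y is only absolutely continuous, so the differential inequality is run on the C^1 minorant R
   of y - y0 instead. *)
lemma Levine_comparison_function:
  assumes "0 \<le> a" "0 < t0"
    and g_ge: "\<And>t. 0 < t \<Longrightarrow> a / 2 * (y t - y0)\<^sup>2 / integral {0..t} y \<le> g t"
  obtains R where "\<And>t. continuous_on {t0..t} R"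
    and "\<And>t. t0 < t \<Longrightarrow> (R has_real_derivative a * ((y t - y0)\<^sup>2 / integral {0..t} y)) (at t)"
    and "\<And>t. t0 \<le> t \<Longrightarrow> y t0 - y0 \<le> R t" and "\<And>t. t0 \<le> t \<Longrightarrow> R t \<le> y t - y0"
proof
  define F where "F t = (y t - y0)\<^sup>2 / integral {0..t} y" for t
  have F_int: "F integrable_on {t0..t}" for t
    using continuous_on_Levine_quotient[OF assms(2)] unfolding F_def[abs_def]
    by (rule integrable_continuous_real)
  show "continuous_on {t0..t} (\<lambda>t. y t0 - y0 + a * integral {t0..t} F)" for t
    using indefinite_integral_continuous_1[OF F_int] by (intro continuous_intros)
  show "((\<lambda>t. y t0 - y0 + a * integral {t0..t} F) has_real_derivative a * F t) (at t)" if "t0 < t" for t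
  proof -
    have "((\<lambda>t. integral {t0..t} F) has_real_derivative F t) (at t within {t0..t + 1})"
      using that assms(2) continuous_on_Levine_quotient[of t0 "t + 1"]
      by (intro integral_has_real_derivative) (auto simp: F_def[abs_def])
    moreover have "t \<in> interior {t0..t + 1}"
      using that by simp
    ultimately have "((\<lambda>t. integral {t0..t} F) has_real_derivative F t) (at t)"
      by (metis at_within_interior)
    then show ?thesis
      by (auto intro!: derivative_eq_intros)
  qed
  show "y t0 - y0 \<le> y t0 - y0 + a * integral {t0..t} F" if "t0 \<le> t" for t
  proof -
    have "0 \<le> F \<tau>" if "\<tau> \<in> {t0..t}" for \<tau>
      using integral_primitive_pos[of \<tau>] that assms(2) by (simp add: F_def)
    then have "0 \<le> integral {t0..t} F"
      using F_int by (intro integral_nonneg) auto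
    then show ?thesis
      using assms(1) by simp
  qed
  show "y t0 - y0 + a * integral {t0..t} F \<le> y t - y0" if "t0 \<le> t" for t
  proof -
    have "(\<lambda>\<tau>. a / 2 * F \<tau>) integrable_on {t0..t}"
      using F_int by (rule integrable_on_mult_right)
    then have "2 * integral {t0..t} (\<lambda>\<tau>. a / 2 * F \<tau>) \<le> y t - y t0"
      using assms(2) that g_ge by (intro primitive_increment_ge) (auto simp: F_def)
    then show ?thesis
      by simp
  qed
qed

lemma Levine_threshold:
  assumes "1 < a"
  obtains t0 where "0 < t0" and "\<And>t. t0 \<le> t \<Longrightarrow> (a + 1) * y0 \<le> (a - 1) * (y t - y0)"
proof
  define t0 where "t0 = max 1 ((a + 1) * y0 / ((a - 1) * (2 * c)))"
  show "0 < t0"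
    by (simp add: t0_def)
  fix t assume "t0 \<le> t"
  then have "(a + 1) * y0 \<le> (a - 1) * (2 * c * t)"
    using assms c_pos by (simp add: t0_def field_simps)
  also have "\<dots> \<le> (a - 1) * (y t - y0)"
    using primitive_ge_linear[of t] \<open>t0 \<le> t\<close> \<open>0 < t0\<close> assms by (intro mult_left_mono) auto
  finally show "(a + 1) * y0 \<le> (a - 1) * (y t - y0)" .
qed

lemma Levine_power_lower_bound:
  assumes "1 < a"
    and g_ge: "\<And>t. 0 < t \<Longrightarrow> a / 2 * (y t - y0)\<^sup>2 / integral {0..t} y \<le> g t"
  obtains t0 k where "0 < t0" "0 < k"
    and "\<And>t. t0 \<le> t \<Longrightarrow> k * integral {0..t} y powr ((a + 1) / 2) \<le> y t"
proof -
  (* beta = (a + 1) / 2 lies strictly between 1 and a; past the threshold this makes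
     R / M powr beta nondecreasing. *)
  define \<beta> where "\<beta> = (a + 1) / 2"
  obtain t0 where "0 < t0" and y_large: "\<And>t. t0 \<le> t \<Longrightarrow> (a + 1) * y0 \<le> (a - 1) * (y t - y0)"
    using Levine_threshold[OF assms(1)] by blast
  obtain R where R_cont: "\<And>t. continuous_on {t0..t} R"
    and R_deriv: "\<And>t. t0 < t \<Longrightarrow> (R has_real_derivative a * ((y t - y0)\<^sup>2 / integral {0..t} y)) (at t)"
    and R_ge: "\<And>t. t0 \<le> t \<Longrightarrow> y t0 - y0 \<le> R t" and R_le: "\<And>t. t0 \<le> t \<Longrightarrow> R t \<le> y t - y0"
    using Levine_comparison_function[OF _ \<open>0 < t0\<close> g_ge] assms(1) by auto
  have R_pos: "0 < R t" if "t0 \<le> t" for t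
    using R_ge[OF that] primitive_minus_initial_pos[OF \<open>0 < t0\<close>] by simp
  have R_growth: "\<beta> * y t * R t \<le> a * ((y t - y0)\<^sup>2 / integral {0..t} y) * integral {0..t} y"
    if "t0 \<le> t" for t
  proof -
    have y_le: "\<beta> * y t \<le> a * (y t - y0)"
      using y_large[OF that] by (simp add: \<beta>_def field_simps)
    have "0 \<le> \<beta> * y t"
      using primitive_nonneg[of t] that \<open>0 < t0\<close> assms(1) by (simp add: \<beta>_def)
    have "\<beta> * y t * R t \<le> a * (y t - y0) * (y t - y0)"
      by (rule mult_mono[OF y_le R_le[OF that]]) (use \<open>0 \<le> \<beta> * y t\<close> y_le R_pos[OF that] in auto)
    then show ?thesis
      using integral_primitive_pos[of t] that \<open>0 < t0\<close> by (simp add: power2_eq_square)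
  qed
  define k where "k = R t0 / integral {0..t0} y powr \<beta>"
  show thesis
  proof (rule that[OF \<open>0 < t0\<close>])
    show "0 < k"
      using R_pos[of t0] integral_primitive_pos[OF \<open>0 < t0\<close>] by (simp add: k_def)
    fix t assume "t0 \<le> t"
    have "k \<le> R t / integral {0..t} y powr \<beta>"
      unfolding k_def
      by (rule ratio_powr_nondecreasing[where M'=y,
            OF \<open>t0 \<le> t\<close> R_cont continuous_on_integral_primitive])
        (use R_pos integral_primitive_pos R_deriv integral_primitive_has_derivative R_growth
          \<open>0 < t0\<close> in auto)
    then show "k * integral {0..t} y powr ((a + 1) / 2) \<le> y t"
      using R_le[OF \<open>t0 \<le> t\<close>] integral_primitive_pos[of t] \<open>t0 \<le> t\<close> \<open>0 < t0\<close> y0_nonneg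
      by (simp add: \<beta>_def field_simps)
  qed
qed

lemma Levine_blowup:
  assumes "1 < a"
    and g_ge: "\<And>t. 0 < t \<Longrightarrow> a / 2 * (y t - y0)\<^sup>2 / integral {0..t} y \<le> g t"
  shows False
proof -
  obtain t0 k where "0 < t0" "0 < k"
    and y_ge: "\<And>t. t0 \<le> t \<Longrightarrow> k * integral {0..t} y powr ((a + 1) / 2) \<le> y t"
    using Levine_power_lower_bound[OF assms] by blast
  show False
  proof (rule superlinear_growth_no_global_solution)
    show "1 < (a + 1) / 2" "0 < k"
      using assms(1) \<open>0 < k\<close> by auto
    fix t assume "t0 \<le> t"
    then show "((\<lambda>t. integral {0..t} y) has_real_derivative y t) (at t)" "0 < integral {0..t} y"
      "k * integral {0..t} y powr ((a + 1) / 2) \<le> y t"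
      using integral_primitive_has_derivative integral_primitive_pos y_ge \<open>0 < t0\<close> by auto
  qed
qed

end

lemma filterlim_sqrt_at_top_if_ge_linear:
  fixes f :: "real \<Rightarrow> real"
  assumes "0 < b" and f_ge: "\<And>t. 0 \<le> t \<Longrightarrow> a + b * t \<le> f t"
  shows "filterlim (\<lambda>t. sqrt (f t)) at_top at_top"
proof -
  have "filterlim (\<lambda>t. a + b * t) at_top at_top"
    using assms(1)
    by (intro filterlim_tendsto_add_at_top[OF tendsto_const]
        filterlim_tendsto_pos_mult_at_top[OF tendsto_const _ filterlim_ident])
  then have "filterlim (\<lambda>t. sqrt (a + b * t)) at_top at_top"
    by (rule filterlim_compose[OF sqrt_at_top])
  then show ?thesis
    by (rule filterlim_at_top_mono)
      (use f_ge in \<open>auto simp: eventually_at_top_linorder intro: real_sqrt_le_mono\<close>)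
qed

(* The data of a solution: y = |v|^2, g = -p E(v), c = -p E(v0) and H the dissipation;
   the last assumption is Cauchy-Schwarz combined with Young's inequality. *)
locale L2_mass_inequalities = primitive_of +
  fixes p c :: real and H :: "real \<Rightarrow> real"
  assumes p_pos: "0 < p" and c_pos: "0 < c" and y0_nonneg: "0 \<le> y0"
    and g_ge: "\<And>t. 0 \<le> t \<Longrightarrow> p * H t + c \<le> g t"
    and H_nonneg: "\<And>t. 0 \<le> H t"
    and Young: "\<And>t e. 0 < t \<Longrightarrow> 0 < e \<Longrightarrow> (y t - y0) / 2 \<le> e * H t + integral {0..t} y / (4 * e)"
begin

sublocale linearly_growing_primitive g y y0 c
proof
  fix t :: real assume "0 \<le> t"
  then show "c \<le> g t"
    using g_ge[of t] mult_nonneg_nonneg[OF less_imp_le[OF p_pos] H_nonneg[of t]] by linarith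
qed (use c_pos y0_nonneg in auto)

lemma sqrt_y_tendsto_at_top: "filterlim (\<lambda>t. sqrt (y t)) at_top at_top"
  using c_pos primitive_ge_linear
  by (intro filterlim_sqrt_at_top_if_ge_linear[where b="2 * c"]) auto

lemma Levine_inequality:
  assumes "0 < t"
  shows "p / 2 / 2 * (y t - y0)\<^sup>2 / integral {0..t} y \<le> g t"
proof -
  have M_pos: "0 < integral {0..t} y"
    by (rule integral_primitive_pos[OF assms])
  have "0 < (y t - y0) / 2"
    using primitive_minus_initial_pos[OF assms] by simp
  then have "((y t - y0) / 2)\<^sup>2 \<le> H t * integral {0..t} y"
    using M_pos Young[OF assms] by (rule sq_le_mult_of_Young_family)
  then have "(y t - y0)\<^sup>2 / integral {0..t} y / 4 \<le> H t"
    using M_pos by (simp add: field_simps power2_eq_square)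
  then have "p * ((y t - y0)\<^sup>2 / integral {0..t} y / 4) \<le> p * H t"
    using less_imp_le[OF p_pos] by (rule mult_left_mono)
  then show ?thesis
    using g_ge[of t] c_pos assms by (simp add: field_simps)
qed

lemma no_global_solution_if_gt_2:
  assumes "2 < p"
  shows False
  using assms Levine_inequality by (intro Levine_blowup[where a="p / 2"]) auto

end

section \<open>Integrals in time and space-time\<close>

lemma abs_le_one_plus_power2: "\<bar>x :: real\<bar> \<le> 1 + x\<^sup>2"
proof (cases "\<bar>x\<bar> \<le> 1")
  case False
  then have "\<bar>x\<bar> \<le> \<bar>x\<bar> * \<bar>x\<bar>"
    by (intro mult_le_cancel_left1[THEN iffD2]) auto
  then show ?thesis
    by (simp add: power2_eq_square)
qed (simp add: add_increasing2)

lemma powr_minus_one_mult_self: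
  assumes "0 \<le> (a :: real)"
  shows "a powr (p - 1) * a = a powr p"
proof (cases "a = 0")
  case False
  then have "a powr (p - 1) * a powr 1 = a powr (p - 1 + 1)"
    by (simp only: powr_add)
  then show ?thesis
    using False assms by simp
qed simp

lemma abs_powr_minus_two_mult_self: "\<bar>a :: real\<bar> powr (p - 2) * a * a = \<bar>a\<bar> powr p"
proof (cases "a = 0")
  case False
  have "\<bar>a\<bar> powr (p - 2) * \<bar>a\<bar> powr 2 = \<bar>a\<bar> powr p"
    by (metis powr_add diff_add_cancel)
  moreover have "\<bar>a\<bar> powr 2 = a * a"
    using False by (simp add: power2_eq_square)
  ultimately show ?thesis
    by (metis mult.assoc)
qed simp

lemma pLap_pair_self:
  fixes u :: "'a::euclidean_space \<Rightarrow> real"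
  assumes [measurable]: "u \<in> borel_measurable lborel"
  shows "pLap_pair s p u u = Wnorm_pow s p u"
proof -
  have "pLap_pair s p u u = (\<integral>z. \<bar>u (fst z) - u (snd z)\<bar> powr p /
      norm (fst z - snd z) powr (real DIM('a) + s * p) \<partial>(lborel \<Otimes>\<^sub>M lborel))"
    unfolding pLap_pair_def by (simp add: abs_powr_minus_two_mult_self)
  also have "\<dots> = Wnorm_pow s p u"
    unfolding Wnorm_pow_def gagliardo_def by (rule integral_eq_nn_integral) auto
  finally show ?thesis .
qed

lemma pLap_pair_zero_right [simp]: "pLap_pair s p u (\<lambda>x. 0) = 0"
  by (simp add: pLap_pair_def)

lemma Wnorm_pow_zero [simp]: "Wnorm_pow s p (\<lambda>x::'a::euclidean_space. 0) = 0"
  by (simp add: Wnorm_pow_def gagliardo_def)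

lemma zero_in_W0 [simp]: "(\<lambda>x::'a::euclidean_space. 0) \<in> W0 s p \<Omega>"
  by (simp add: W0_def gagliardo_def)

lemma Wnorm_pow_nonneg: "0 \<le> Wnorm_pow s p u"
  by (simp add: Wnorm_pow_def)

lemma Lnorm_pow_nonneg: "0 \<le> Lnorm_pow r \<Omega> u"
  unfolding Lnorm_pow_def set_lebesgue_integral_def
  by (rule Bochner_Integration.integral_nonneg) auto

lemma Lnorm_pow_two: "Lnorm_pow 2 \<Omega> u = (\<integral>x. indicator \<Omega> x * (u x)\<^sup>2 \<partial>lborel)"
proof -
  have "\<bar>a\<bar> powr 2 = a\<^sup>2" for a :: real
    by (cases "a = 0") auto
  then show ?thesis
    by (simp add: Lnorm_pow_def set_lebesgue_integral_def)
qed

lemma lborel_integral_eq_integral_Icc: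
  fixes f :: "real \<Rightarrow> real"
  assumes "integrable lborel (\<lambda>\<tau>. indicator {0<..<t} \<tau> * f \<tau>)"
  shows "f integrable_on {0..t}"
    and "(\<integral>\<tau>. indicator {0<..<t} \<tau> * f \<tau> \<partial>lborel) = integral {0..t} f"
proof -
  have "set_integrable lborel {0<..<t} f"
    using assms by (simp add: set_integrable_def)
  from set_borel_integral_eq_integral[OF this]
  show "f integrable_on {0..t}"
    and "(\<integral>\<tau>. indicator {0<..<t} \<tau> * f \<tau> \<partial>lborel) = integral {0..t} f"
    by (simp_all add: integrable_on_open_interval_real set_lebesgue_integral_def
        integral_open_interval_real)
qed

lemma nn_integral_set_less_top_if_bounded:
  fixes f :: "'b \<Rightarrow> real"
  assumes "A \<in> sets M" "emeasure M A < \<infinity>" and "AE x in M. x \<in> A \<longrightarrow> f x \<le> B"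
  shows "(\<integral>\<^sup>+x\<in>A. ennreal (f x) \<partial>M) < \<infinity>"
proof -
  have "(\<integral>\<^sup>+x\<in>A. ennreal (f x) \<partial>M) \<le> (\<integral>\<^sup>+x. ennreal (max 0 B) * indicator A x \<partial>M)"
    using assms(3) by (intro nn_integral_mono_AE)
      (auto elim!: eventually_mono intro: ennreal_leI split: split_indicator)
  also have "\<dots> = ennreal (max 0 B) * emeasure M A"
    using assms(1) by (rule nn_integral_cmult_indicator)
  also have "\<dots> < \<infinity>"
    using assms(2) by (simp add: ennreal_mult_less_top)
  finally show ?thesis .
qed

lemma integrable_indicator_if_square_finite:
  fixes g :: "real \<Rightarrow> real"
  assumes [measurable]: "g \<in> borel_measurable lborel" "A \<in> sets lborel"
    and "emeasure lborel A < \<infinity>"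
    and "(\<integral>\<^sup>+\<tau>. ennreal ((g \<tau>)\<^sup>2) * indicator A \<tau> \<partial>lborel) < \<infinity>"
  shows "integrable lborel (\<lambda>\<tau>. indicator A \<tau> * g \<tau>)"
proof (rule integrableI_bounded)
  have "(\<integral>\<^sup>+\<tau>. ennreal (norm (indicator A \<tau> * g \<tau>)) \<partial>lborel)
      \<le> (\<integral>\<^sup>+\<tau>. indicator A \<tau> + ennreal ((g \<tau>)\<^sup>2) * indicator A \<tau> \<partial>lborel)"
  proof (rule nn_integral_mono)
    fix \<tau>
    have "ennreal \<bar>g \<tau>\<bar> \<le> 1 + ennreal ((g \<tau>)\<^sup>2)"
      using abs_le_one_plus_power2[of "g \<tau>"]
      by (metis ennreal_leI ennreal_plus ennreal_1 zero_le_one zero_le_power2)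
    then show "ennreal (norm (indicator A \<tau> * g \<tau>)) \<le> indicator A \<tau> + ennreal ((g \<tau>)\<^sup>2) * indicator A \<tau>"
      by (auto split: split_indicator)
  qed
  also have "\<dots> = emeasure lborel A + (\<integral>\<^sup>+\<tau>. ennreal ((g \<tau>)\<^sup>2) * indicator A \<tau> \<partial>lborel)"
    by (subst nn_integral_add) (use assms(2) in auto)
  also have "\<dots> < \<infinity>"
    using assms(3,4) by simp
  finally show "(\<integral>\<^sup>+\<tau>. ennreal (norm (indicator A \<tau> * g \<tau>)) \<partial>lborel) < \<infinity>" .
qed measurable

lemma integral_lower_triangle_eq_half_square:
  fixes f :: "real \<Rightarrow> real"
  assumes f_int: "integrable lborel f"
  defines "Lo \<equiv> \<lambda>z::real \<times> real. if snd z < fst z then f (fst z) * f (snd z) else 0"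
  shows "integrable (lborel \<Otimes>\<^sub>M lborel) Lo"
    and "integral\<^sup>L (lborel \<Otimes>\<^sub>M lborel) Lo = (\<integral>x. f x \<partial>lborel)\<^sup>2 / 2"
proof -
  have [measurable]: "f \<in> borel_measurable lborel"
    using f_int by (rule borel_measurable_integrable)
  define P where "P z = f (fst z) * f (snd z)" for z :: "real \<times> real"
  define Up where "Up z = (if fst z < snd z then P z else 0)" for z :: "real \<times> real"
  have P_meas [measurable]: "P \<in> borel_measurable (lborel \<Otimes>\<^sub>M lborel)"
    unfolding P_def by measurable
  have [measurable]: "Lo \<in> borel_measurable (lborel \<Otimes>\<^sub>M lborel)"
    unfolding Lo_def by measurable
  have [measurable]: "Up \<in> borel_measurable (lborel \<Otimes>\<^sub>M lborel)"
    unfolding Up_def by measurable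
  have P_int: "integrable (lborel \<Otimes>\<^sub>M lborel) P"
  proof (rule lborel_pair.Fubini_integrable[OF P_meas])
    have "(\<lambda>x. \<integral>y. norm (P (x, y)) \<partial>lborel) = (\<lambda>x. \<bar>f x\<bar> * (\<integral>y. \<bar>f y\<bar> \<partial>lborel))"
      by (simp add: P_def abs_mult)
    then show "integrable lborel (\<lambda>x. \<integral>y. norm (P (x, y)) \<partial>lborel)"
      using f_int by simp
    show "AE x in lborel. integrable lborel (\<lambda>y. P (x, y))"
      using f_int by (simp add: P_def)
  qed
  show Lo_int: "integrable (lborel \<Otimes>\<^sub>M lborel) Lo"
    by (rule Bochner_Integration.integrable_bound[OF P_int]) (auto simp: Lo_def P_def)
  have Up_int: "integrable (lborel \<Otimes>\<^sub>M lborel) Up"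
    by (rule Bochner_Integration.integrable_bound[OF P_int]) (auto simp: Up_def)
  (* The plane is the union of a null diagonal and two half-planes exchanged by the symmetry
     (x,y) -> (y,x), which preserves P. *)
  have "AE z in lborel \<Otimes>\<^sub>M lborel. P z = Lo z + Up z"
  proof (rule lborel_pair.AE_pair_measure)
    show "AE x in lborel. AE y in lborel. P (x, y) = Lo (x, y) + Up (x, y)"
      by (intro AE_I2 eventually_mono[OF AE_lborel_singleton]) (auto simp: Lo_def Up_def P_def)
  qed measurable
  then have "integral\<^sup>L (lborel \<Otimes>\<^sub>M lborel) P
      = integral\<^sup>L (lborel \<Otimes>\<^sub>M lborel) Lo + integral\<^sup>L (lborel \<Otimes>\<^sub>M lborel) Up"
    using Lo_int Up_int by (subst integral_cong_AE[where g="\<lambda>z. Lo z + Up z"]) auto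
  moreover have "integral\<^sup>L (lborel \<Otimes>\<^sub>M lborel) Up = integral\<^sup>L (lborel \<Otimes>\<^sub>M lborel) Lo"
  proof -
    have "integral\<^sup>L (lborel \<Otimes>\<^sub>M lborel) Lo = (\<integral>(x, y). Lo (y, x) \<partial>(lborel \<Otimes>\<^sub>M lborel))"
      using lborel_pair.integral_product_swap[of Lo] by simp
    also have "\<dots> = integral\<^sup>L (lborel \<Otimes>\<^sub>M lborel) Up"
      by (rule Bochner_Integration.integral_cong) (auto simp: Lo_def Up_def P_def mult.commute)
    finally show ?thesis by simp
  qed
  moreover have "integral\<^sup>L (lborel \<Otimes>\<^sub>M lborel) P = (\<integral>x. f x \<partial>lborel)\<^sup>2"
    using lborel_pair.integral_fst'[OF P_int] by (simp add: P_def power2_eq_square)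
  ultimately show "integral\<^sup>L (lborel \<Otimes>\<^sub>M lborel) Lo = (\<integral>x. f x \<partial>lborel)\<^sup>2 / 2"
    by simp
qed

lemma lborel_integral_mult_primitive:
  fixes f :: "real \<Rightarrow> real"
  assumes f_int: "integrable lborel (\<lambda>\<tau>. indicator {0<..<t} \<tau> * f \<tau>)"
  defines "F \<equiv> \<lambda>\<tau>. \<integral>\<sigma>. indicator {0<..<\<tau>} \<sigma> * f \<sigma> \<partial>lborel"
  shows "integrable lborel (\<lambda>\<tau>. indicator {0<..<t} \<tau> * (f \<tau> * F \<tau>))"
    and "(\<integral>\<tau>. indicator {0<..<t} \<tau> * (f \<tau> * F \<tau>) \<partial>lborel) = (F t)\<^sup>2 / 2"
proof -
  note triangle = integral_lower_triangle_eq_half_square[OF f_int]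
  have slice: "(\<integral>y. (if y < x then indicator {0<..<t} x * f x * (indicator {0<..<t} y * f y) else 0) \<partial>lborel)
      = indicator {0<..<t} x * (f x * F x)" for x
  proof -
    have "(\<lambda>y. if y < x then indicator {0<..<t} x * f x * (indicator {0<..<t} y * f y) else 0)
        = (\<lambda>y. indicator {0<..<t} x * f x * (indicator {0<..<x} y * f y))"
      by (auto simp: indicator_def fun_eq_iff)
    then show ?thesis
      by (simp add: F_def)
  qed
  show "integrable lborel (\<lambda>\<tau>. indicator {0<..<t} \<tau> * (f \<tau> * F \<tau>))"
    using lborel_pair.integrable_fst'[OF triangle(1)] by (simp only: fst_conv snd_conv slice)
  show "(\<integral>\<tau>. indicator {0<..<t} \<tau> * (f \<tau> * F \<tau>) \<partial>lborel) = (F t)\<^sup>2 / 2"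
    using lborel_pair.integral_fst'[OF triangle(1)] triangle(2)
    by (simp only: fst_conv snd_conv slice) (simp add: F_def)
qed

lemma measurable_uncurry_compose:
  fixes v :: "'b::euclidean_space \<Rightarrow> 'c::euclidean_space \<Rightarrow> real"
  assumes "(\<lambda>z. v (fst z) (snd z)) \<in> borel_measurable (lborel \<Otimes>\<^sub>M lborel)"
    and [measurable]: "f \<in> borel_measurable M" "g \<in> borel_measurable M"
  shows "(\<lambda>x. v (f x) (g x)) \<in> borel_measurable M"
proof -
  have "sets (lborel \<Otimes>\<^sub>M lborel) = sets ((borel :: 'b measure) \<Otimes>\<^sub>M (borel :: 'c measure))"
    by (intro sets_pair_measure_cong) auto
  moreover have "(\<lambda>x. (f x, g x)) \<in> measurable M (borel \<Otimes>\<^sub>M borel)"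
    by measurable
  ultimately have "(\<lambda>x. (f x, g x)) \<in> measurable M (lborel \<Otimes>\<^sub>M lborel)"
    by (simp add: measurable_def space_pair_measure)
  from measurable_compose[OF this assms(1)] show ?thesis
    by simp
qed

lemma cylinder_integral_eq_time_integral:
  fixes f :: "real \<Rightarrow> 'a::euclidean_space \<Rightarrow> real"
  assumes int: "integrable (lborel \<Otimes>\<^sub>M lborel) (\<lambda>z. indicator ({0<..<t} \<times> \<Omega>) z * f (fst z) (snd z))"
    and slice: "\<And>\<tau>. \<tau> \<in> {0<..<t} \<Longrightarrow> (\<integral>x. indicator \<Omega> x * f \<tau> x \<partial>lborel) = h \<tau>"
  shows "integrable lborel (\<lambda>\<tau>. indicator {0<..<t} \<tau> * h \<tau>)"
    and "(\<integral>z. indicator ({0<..<t} \<times> \<Omega>) z * f (fst z) (snd z) \<partial>(lborel \<Otimes>\<^sub>M lborel))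
      = (\<integral>\<tau>. indicator {0<..<t} \<tau> * h \<tau> \<partial>lborel)"
proof -
  have slice': "(\<integral>x. indicator ({0<..<t} \<times> \<Omega>) (\<tau>, x) * f \<tau> x \<partial>lborel) = indicator {0<..<t} \<tau> * h \<tau>"
    for \<tau>
    using slice[of \<tau>] by (cases "\<tau> \<in> {0<..<t}") (simp_all add: indicator_times)
  show "integrable lborel (\<lambda>\<tau>. indicator {0<..<t} \<tau> * h \<tau>)"
    using lborel_pair.integrable_fst'[OF int] by (simp add: slice')
  show "(\<integral>z. indicator ({0<..<t} \<times> \<Omega>) z * f (fst z) (snd z) \<partial>(lborel \<Otimes>\<^sub>M lborel))
      = (\<integral>\<tau>. indicator {0<..<t} \<tau> * h \<tau> \<partial>lborel)"
    using lborel_pair.integral_fst'[OF int] by (simp add: slice')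
qed

section \<open>Weak solutions tested with themselves\<close>

locale weak_solution =
  fixes s p lam :: real and \<Omega> :: "'a::euclidean_space set" and T :: real
    and v0 :: "'a \<Rightarrow> real" and v w :: "real \<Rightarrow> 'a \<Rightarrow> real"
  assumes open_domain: "open \<Omega>" and bounded_domain: "bounded \<Omega>"
    and p_gt_1: "1 < p" and T_pos: "0 < T"
    and v0_W0: "v0 \<in> W0 s p \<Omega>" and v0_bounded: "\<exists>M. AE x in lborel. \<bar>v0 x\<bar> \<le> M"
    and weak_sol: "weak_sol s p lam (p - 1) \<Omega> T v0 v w"
    and energy_ineq: "energy_ineq s p lam (p - 1) \<Omega> T v0 v w"
begin

abbreviation E :: "('a \<Rightarrow> real) \<Rightarrow> real"
  where "E \<equiv> energy s p lam (p - 1) \<Omega>"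

abbreviation lborel_tx :: "(real \<times> 'a) measure"
  where "lborel_tx \<equiv> lborel \<Otimes>\<^sub>M lborel"

abbreviation cylinder :: "real \<Rightarrow> (real \<times> 'a) set"
  where "cylinder t \<equiv> {0<..<t} \<times> \<Omega>"

lemma v_measurable [measurable (raw)]:
  "f \<in> borel_measurable M \<Longrightarrow> g \<in> borel_measurable M \<Longrightarrow> (\<lambda>x. v (f x) (g x)) \<in> borel_measurable M"
  using weak_sol unfolding weak_sol_def by (blast intro: measurable_uncurry_compose)

lemma w_measurable [measurable (raw)]:
  "f \<in> borel_measurable M \<Longrightarrow> g \<in> borel_measurable M \<Longrightarrow> (\<lambda>x. w (f x) (g x)) \<in> borel_measurable M"
  using weak_sol unfolding weak_sol_def by (blast intro: measurable_uncurry_compose)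

lemma domain_sets [measurable]: "\<Omega> \<in> sets lborel"
  using open_domain by simp

lemma v0_measurable [measurable]: "v0 \<in> borel_measurable lborel"
  using v0_W0 by (simp add: W0_def)

lemma v_slice_measurable [measurable]: "v t \<in> borel_measurable lborel"
  using v_measurable[of "\<lambda>_. t" lborel "\<lambda>x. x"] by simp

lemma cylinder_sets [measurable]: "cylinder t \<in> sets lborel_tx"
  using open_domain by (intro pair_measureI) auto

lemma emeasure_cylinder_finite: "emeasure lborel_tx (cylinder t) < \<infinity>"
proof -
  have "emeasure lborel_tx (cylinder t) = emeasure lborel {0<..<t} * emeasure lborel \<Omega>"
    using open_domain by (intro lborel.emeasure_pair_measure_Times) auto
  then show ?thesis
    using emeasure_bounded_finite[OF bounded_domain] emeasure_bounded_finite[of "{0<..<t}"]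
    by (simp add: ennreal_mult_less_top)
qed

lemma v_nonneg: "t \<in> {0..<T} \<Longrightarrow> AE x in lborel. 0 \<le> v t x"
  using weak_sol by (simp add: weak_sol_def)

lemma v_in_W0: "AE t in lborel. t \<in> {0<..<T} \<longrightarrow> v t \<in> W0 s p \<Omega>"
  using weak_sol by (simp add: weak_sol_def)

lemma w_square_finite:
  "(\<integral>\<^sup>+ z\<in>cylinder T. ennreal ((w (fst z) (snd z))\<^sup>2) \<partial>lborel_tx) < \<infinity>"
  using weak_sol by (simp add: weak_sol_def)

lemma v_eq_v0_plus_integral_w:
  "t \<in> {0..<T} \<Longrightarrow> AE x in lborel. x \<in> \<Omega> \<longrightarrow> v t x = v0 x + (LBINT \<tau>=0..t. w \<tau> x)"
  using weak_sol by (simp add: weak_sol_def)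

lemma weak_formulation:
  "test_fun s p \<Omega> T \<phi> \<Longrightarrow>
    (\<integral>z\<in>cylinder T. w (fst z) (snd z) * \<phi> (fst z) (snd z) \<partial>lborel_tx)
    + (LBINT t=0..T. pLap_pair s p (v t) (\<phi> t))
    = lam * (\<integral>z\<in>cylinder T. v (fst z) (snd z) powr (p - 1) * \<phi> (fst z) (snd z) \<partial>lborel_tx)"
  using weak_sol by (simp add: weak_sol_def)

lemma v_essentially_bounded:
  obtains M where "0 \<le> M" "AE z in lborel_tx. fst z \<in> {0<..<T} \<longrightarrow> \<bar>v (fst z) (snd z)\<bar> \<le> M"
proof -
  obtain M where M: "AE t in lborel. t \<in> {0<..<T} \<longrightarrow> (AE x in lborel. \<bar>v t x\<bar> \<le> M)"
    using weak_sol by (auto simp: weak_sol_def)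
  have "AE z in lborel_tx. fst z \<in> {0<..<T} \<longrightarrow> \<bar>v (fst z) (snd z)\<bar> \<le> max 0 M"
  proof (rule lborel_pair.AE_pair_measure)
    show "AE t in lborel. AE x in lborel. fst (t, x) \<in> {0<..<T} \<longrightarrow> \<bar>v (fst (t, x)) (snd (t, x))\<bar> \<le> max 0 M"
      using M by (rule eventually_mono) (auto elim: eventually_mono)
  qed measurable
  then show ?thesis
    using that[of "max 0 M"] by simp
qed

lemma Wnorm_pow_essentially_bounded:
  obtains K where "AE t in lborel. t \<in> {0<..<T} \<longrightarrow> Wnorm_pow s p (v t) \<le> K"
  using weak_sol by (auto simp: weak_sol_def)

lemma v_nonneg_tx: "AE z in lborel_tx. fst z \<in> {0..<T} \<longrightarrow> 0 \<le> v (fst z) (snd z)"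
proof (rule lborel_pair.AE_pair_measure)
  show "AE t in lborel. AE x in lborel. fst (t, x) \<in> {0..<T} \<longrightarrow> 0 \<le> v (fst (t, x)) (snd (t, x))"
  proof (rule AE_I2)
    fix t :: real
    show "AE x in lborel. fst (t, x) \<in> {0..<T} \<longrightarrow> 0 \<le> v (fst (t, x)) (snd (t, x))"
      using v_nonneg[of t] by (cases "t \<in> {0..<T}") (auto elim: eventually_mono)
  qed
qed measurable

lemma integrable_cylinder_if_bounded:
  fixes f :: "real \<times> 'a \<Rightarrow> real"
  assumes [measurable]: "f \<in> borel_measurable lborel_tx"
    and "AE z in lborel_tx. z \<in> cylinder t \<longrightarrow> \<bar>f z\<bar> \<le> B"
  shows "integrable lborel_tx (\<lambda>z. indicator (cylinder t) z * f z)"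
  using assms(2) emeasure_cylinder_finite open_domain
  by (intro integrableI_bounded_set[where A="cylinder t" and B=B])
    (auto elim!: eventually_mono split: split_indicator)

lemma integrable_v_power:
  assumes "t \<le> T"
  shows "integrable lborel_tx
    (\<lambda>z. indicator (cylinder t) z * (v (fst z) (snd z) powr (p - 1) * v (fst z) (snd z)))"
proof -
  obtain M where "0 \<le> M" and M: "AE z in lborel_tx. fst z \<in> {0<..<T} \<longrightarrow> \<bar>v (fst z) (snd z)\<bar> \<le> M"
    by (rule v_essentially_bounded)
  show ?thesis
  proof (rule integrable_cylinder_if_bounded[where B="M powr p"])
    show "AE z in lborel_tx. z \<in> cylinder t \<longrightarrow>
        \<bar>v (fst z) (snd z) powr (p - 1) * v (fst z) (snd z)\<bar> \<le> M powr p"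
      using M v_nonneg_tx
    proof eventually_elim
      case (elim z)
      then show ?case
        using assms p_gt_1 by (auto simp: powr_minus_one_mult_self intro!: powr_mono2)
    qed
  qed measurable
qed

lemma integrable_v_square:
  assumes "t \<le> T"
  shows "integrable lborel_tx (\<lambda>z. indicator (cylinder t) z * (v (fst z) (snd z))\<^sup>2)"
proof -
  obtain M where "0 \<le> M" and M: "AE z in lborel_tx. fst z \<in> {0<..<T} \<longrightarrow> \<bar>v (fst z) (snd z)\<bar> \<le> M"
    by (rule v_essentially_bounded)
  show ?thesis
  proof (rule integrable_cylinder_if_bounded[where B="M\<^sup>2"])
    show "AE z in lborel_tx. z \<in> cylinder t \<longrightarrow> \<bar>(v (fst z) (snd z))\<^sup>2\<bar> \<le> M\<^sup>2"
      using M
    proof eventually_elim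
      case (elim z)
      then show ?case
        using power_mono[of "\<bar>v (fst z) (snd z)\<bar>" M 2] assms by (auto simp: mem_Times_iff)
    qed
  qed measurable
qed

lemma integrable_w_square:
  assumes "t \<le> T"
  shows "integrable lborel_tx (\<lambda>z. indicator (cylinder t) z * (w (fst z) (snd z))\<^sup>2)"
proof (rule Bochner_Integration.integrable_bound)
  show "integrable lborel_tx (\<lambda>z. indicator (cylinder T) z * (w (fst z) (snd z))\<^sup>2)"
  proof (rule integrableI_bounded)
    have "(\<integral>\<^sup>+ z. ennreal (norm (indicator (cylinder T) z * (w (fst z) (snd z))\<^sup>2)) \<partial>lborel_tx)
        = (\<integral>\<^sup>+ z\<in>cylinder T. ennreal ((w (fst z) (snd z))\<^sup>2) \<partial>lborel_tx)"
      by (rule nn_integral_cong) (auto split: split_indicator)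
    then show "(\<integral>\<^sup>+ z. ennreal (norm (indicator (cylinder T) z * (w (fst z) (snd z))\<^sup>2)) \<partial>lborel_tx) < \<infinity>"
      using w_square_finite by simp
  qed measurable
qed (use assms in \<open>auto split: split_indicator simp: mem_Times_iff\<close>)

lemma integrable_w_mult_v:
  assumes "t \<le> T"
  shows "integrable lborel_tx (\<lambda>z. indicator (cylinder t) z * (w (fst z) (snd z) * v (fst z) (snd z)))"
proof -
  obtain M where "0 \<le> M" and M: "AE z in lborel_tx. fst z \<in> {0<..<T} \<longrightarrow> \<bar>v (fst z) (snd z)\<bar> \<le> M"
    by (rule v_essentially_bounded)
  show ?thesis
  proof (rule Bochner_Integration.integrable_bound)
    show "integrable lborel_tx (\<lambda>z. indicator (cylinder T) z * M + M * (indicator (cylinder T) z * (w (fst z) (snd z))\<^sup>2))"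
      using integrable_cylinder_if_bounded[where f="\<lambda>_. M" and B="\<bar>M\<bar>" and t=T]
        integrable_w_square[of T]
      by (intro Bochner_Integration.integrable_add integrable_mult_right) auto
    show "AE z in lborel_tx. norm (indicator (cylinder t) z * (w (fst z) (snd z) * v (fst z) (snd z)))
        \<le> norm (indicator (cylinder T) z * M + M * (indicator (cylinder T) z * (w (fst z) (snd z))\<^sup>2))"
      using M
    proof eventually_elim
      case (elim z)
      show ?case
      proof (cases "z \<in> cylinder t")
        case True
        then have "\<bar>v (fst z) (snd z)\<bar> \<le> M" and "z \<in> cylinder T"
          using elim assms by (auto simp: mem_Times_iff)
        moreover have "\<bar>w (fst z) (snd z) * v (fst z) (snd z)\<bar> \<le> (1 + (w (fst z) (snd z))\<^sup>2) * M"
          unfolding abs_mult using calculation(1)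
          by (intro mult_mono abs_le_one_plus_power2) auto
        ultimately show ?thesis
          using True \<open>0 \<le> M\<close> by (simp add: algebra_simps)
      qed (simp add: \<open>0 \<le> M\<close>)
    qed
  qed measurable
qed

lemma test_fun_truncated_solution:
  assumes "0 < t" "t \<le> T"
  shows "test_fun s p \<Omega> T (\<lambda>\<tau> x. if \<tau> < t then v \<tau> x else 0)"
  unfolding test_fun_def
proof (intro conjI)
  obtain M where "0 \<le> M" and M: "AE z in lborel_tx. fst z \<in> {0<..<T} \<longrightarrow> \<bar>v (fst z) (snd z)\<bar> \<le> M"
    by (rule v_essentially_bounded)
  obtain K where K: "AE \<tau> in lborel. \<tau> \<in> {0<..<T} \<longrightarrow> Wnorm_pow s p (v \<tau>) \<le> K"
    by (rule Wnorm_pow_essentially_bounded)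
  have slice: "(\<lambda>x. if \<tau> < t then v \<tau> x else 0) = (if \<tau> < t then v \<tau> else (\<lambda>x. 0))" for \<tau>
    by auto
  show "(\<lambda>z. if fst z < t then v (fst z) (snd z) else 0) \<in> borel_measurable lborel_tx"
    by measurable
  show "AE \<tau> in lborel. \<tau> \<in> {0<..<T} \<longrightarrow> (\<lambda>x. if \<tau> < t then v \<tau> x else 0) \<in> W0 s p \<Omega>"
    using v_in_W0 by (rule eventually_mono) (simp add: slice)
  show "(\<integral>\<^sup>+ \<tau>\<in>{0<..<T}. ennreal (Wnorm_pow s p (\<lambda>x. if \<tau> < t then v \<tau> x else 0) powr (1 / p)) \<partial>lborel) < \<infinity>"
  proof (rule nn_integral_set_less_top_if_bounded[where B="max 0 K powr (1 / p)"])
    show "AE \<tau> in lborel. \<tau> \<in> {0<..<T} \<longrightarrow>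
        Wnorm_pow s p (\<lambda>x. if \<tau> < t then v \<tau> x else 0) powr (1 / p) \<le> max 0 K powr (1 / p)"
      using K by (rule eventually_mono)
        (use p_gt_1 Wnorm_pow_nonneg in \<open>auto simp: slice intro!: powr_mono2\<close>)
  qed (use emeasure_bounded_finite[of "{0<..<T}"] in auto)
  show "(\<integral>\<^sup>+ z\<in>cylinder T. ennreal ((if fst z < t then v (fst z) (snd z) else 0)\<^sup>2) \<partial>lborel_tx) < \<infinity>"
  proof (rule nn_integral_set_less_top_if_bounded[OF cylinder_sets emeasure_cylinder_finite, where B="M\<^sup>2"])
    show "AE z in lborel_tx. z \<in> cylinder T \<longrightarrow> (if fst z < t then v (fst z) (snd z) else 0)\<^sup>2 \<le> M\<^sup>2"
      using M by (rule eventually_mono)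
        (use \<open>0 \<le> M\<close> power_mono[of "\<bar>v _ _\<bar>" M 2] in \<open>auto simp: mem_Times_iff\<close>)
  qed
qed

definition dt_pairing :: "real \<Rightarrow> real" where
  "dt_pairing t =
    (\<integral>z. indicator (cylinder t) z * (w (fst z) (snd z) * v (fst z) (snd z)) \<partial>lborel_tx)"

definition dissipation :: "real \<Rightarrow> real" where
  "dissipation t = (\<integral>z\<in>cylinder t. (w (fst z) (snd z))\<^sup>2 \<partial>lborel_tx)"

lemma tested_with_truncated_solution:
  assumes "0 < t" "t \<le> T"
  shows "dt_pairing t + (\<integral>\<tau>. indicator {0<..<t} \<tau> * Wnorm_pow s p (v \<tau>) \<partial>lborel)
    = lam * (\<integral>z. indicator (cylinder t) z * (v (fst z) (snd z) powr (p - 1) * v (fst z) (snd z)) \<partial>lborel_tx)"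
proof -
  define \<phi> where "\<phi> = (\<lambda>\<tau> x. if \<tau> < t then v \<tau> x else 0)"
  have "(\<integral>z\<in>cylinder T. w (fst z) (snd z) * \<phi> (fst z) (snd z) \<partial>lborel_tx) = dt_pairing t"
    unfolding set_lebesgue_integral_def dt_pairing_def
    by (rule Bochner_Integration.integral_cong) (use assms in \<open>auto simp: \<phi>_def indicator_def\<close>)
  moreover have "(\<integral>z\<in>cylinder T. v (fst z) (snd z) powr (p - 1) * \<phi> (fst z) (snd z) \<partial>lborel_tx)
      = (\<integral>z. indicator (cylinder t) z * (v (fst z) (snd z) powr (p - 1) * v (fst z) (snd z)) \<partial>lborel_tx)"
    unfolding set_lebesgue_integral_def
    by (rule Bochner_Integration.integral_cong) (use assms in \<open>auto simp: \<phi>_def indicator_def\<close>)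
  moreover have "(LBINT \<tau>=0..T. pLap_pair s p (v \<tau>) (\<phi> \<tau>))
      = (\<integral>\<tau>. indicator {0<..<t} \<tau> * Wnorm_pow s p (v \<tau>) \<partial>lborel)"
  proof -
    have "(LBINT \<tau>=0..T. pLap_pair s p (v \<tau>) (\<phi> \<tau>))
        = (\<integral>\<tau>. indicator {0<..<T} \<tau> * pLap_pair s p (v \<tau>) (\<phi> \<tau>) \<partial>lborel)"
      using T_pos
      by (simp add: interval_lebesgue_integral_le_eq zero_ereal_def set_lebesgue_integral_def)
    also have "\<dots> = (\<integral>\<tau>. indicator {0<..<t} \<tau> * Wnorm_pow s p (v \<tau>) \<partial>lborel)"
      by (rule Bochner_Integration.integral_cong)
        (use assms in \<open>auto simp: \<phi>_def pLap_pair_self indicator_def\<close>)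
    finally show ?thesis .
  qed
  ultimately show ?thesis
    using weak_formulation[OF test_fun_truncated_solution[OF assms]] by (simp add: \<phi>_def)
qed

lemma integrable_Wnorm_pow:
  assumes "t \<le> T"
  shows "integrable lborel (\<lambda>\<tau>. indicator {0<..<t} \<tau> * Wnorm_pow s p (v \<tau>))"
proof -
  obtain K where K: "AE \<tau> in lborel. \<tau> \<in> {0<..<T} \<longrightarrow> Wnorm_pow s p (v \<tau>) \<le> K"
    by (rule Wnorm_pow_essentially_bounded)
  show ?thesis
  proof (rule integrableI_bounded_set[where A="{0<..<t}" and B=K])
    show "(\<lambda>\<tau>. indicator {0<..<t} \<tau> * Wnorm_pow s p (v \<tau>)) \<in> borel_measurable lborel"
      unfolding Wnorm_pow_def gagliardo_def by measurable
    show "AE \<tau> in lborel. \<tau> \<in> {0<..<t} \<longrightarrow> norm (indicator {0<..<t} \<tau> * Wnorm_pow s p (v \<tau>)) \<le> K"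
      using K by (rule eventually_mono) (use assms in \<open>auto simp: Wnorm_pow_nonneg\<close>)
  qed (use emeasure_bounded_finite[of "{0<..<t}"] in auto)
qed

lemma Lnorm_pow_slice:
  assumes "\<tau> \<in> {0..<T}"
  shows "(\<integral>x. indicator \<Omega> x * (v \<tau> x powr (p - 1) * v \<tau> x) \<partial>lborel) = Lnorm_pow p \<Omega> (v \<tau>)"
proof -
  have "(\<integral>x. indicator \<Omega> x * (v \<tau> x powr (p - 1) * v \<tau> x) \<partial>lborel)
      = (\<integral>x. indicator \<Omega> x * \<bar>v \<tau> x\<bar> powr p \<partial>lborel)"
    using v_nonneg[OF assms]
    by (intro integral_cong_AE) (auto elim!: eventually_mono simp: powr_minus_one_mult_self)
  then show ?thesis
    by (simp add: Lnorm_pow_def set_lebesgue_integral_def)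
qed

lemma dt_pairing_eq_integral_energy:
  assumes "0 < t" "t \<le> T"
  shows "integrable lborel (\<lambda>\<tau>. indicator {0<..<t} \<tau> * (- p * E (v \<tau>)))"
    and "dt_pairing t = (\<integral>\<tau>. indicator {0<..<t} \<tau> * (- p * E (v \<tau>)) \<partial>lborel)"
proof -
  note Lp = cylinder_integral_eq_time_integral[OF integrable_v_power[OF assms(2)] Lnorm_pow_slice]
  have Lp_int: "integrable lborel (\<lambda>\<tau>. indicator {0<..<t} \<tau> * Lnorm_pow p \<Omega> (v \<tau>))"
    using Lp(1) assms by auto
  have energy_eq: "indicator {0<..<t} \<tau> * (- p * E (v \<tau>))
      = lam * (indicator {0<..<t} \<tau> * Lnorm_pow p \<Omega> (v \<tau>)) - indicator {0<..<t} \<tau> * Wnorm_pow s p (v \<tau>)"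
    for \<tau>
    using p_gt_1 by (simp add: energy_def algebra_simps)
  show "integrable lborel (\<lambda>\<tau>. indicator {0<..<t} \<tau> * (- p * E (v \<tau>)))"
    unfolding energy_eq using Lp_int integrable_Wnorm_pow[OF assms(2)] by auto
  have "dt_pairing t = lam * (\<integral>\<tau>. indicator {0<..<t} \<tau> * Lnorm_pow p \<Omega> (v \<tau>) \<partial>lborel)
      - (\<integral>\<tau>. indicator {0<..<t} \<tau> * Wnorm_pow s p (v \<tau>) \<partial>lborel)"
    using tested_with_truncated_solution[OF assms] Lp(2) assms by auto
  also have "\<dots> = (\<integral>\<tau>. indicator {0<..<t} \<tau> * (- p * E (v \<tau>)) \<partial>lborel)"
    unfolding energy_eq using Lp_int integrable_Wnorm_pow[OF assms(2)] by simp
  finally show "dt_pairing t = (\<integral>\<tau>. indicator {0<..<t} \<tau> * (- p * E (v \<tau>)) \<partial>lborel)" .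
qed

lemma dissipation_nonneg: "0 \<le> dissipation t"
  unfolding dissipation_def set_lebesgue_integral_def
  by (rule Bochner_Integration.integral_nonneg) auto

lemma energy_rate_ge_dissipation:
  assumes "\<tau> \<in> {0..<T}"
  shows "p * dissipation \<tau> - p * E v0 \<le> - p * E (v \<tau>)"
proof -
  have "dissipation \<tau> + E (v \<tau>) \<le> E v0"
    using energy_ineq assms by (simp add: energy_ineq_def dissipation_def)
  then show ?thesis
    using p_gt_1 mult_left_mono[of "dissipation \<tau> + E (v \<tau>)" "E v0" p] by (simp add: algebra_simps)
qed

lemma dt_pairing_le_Young:
  assumes "0 < t" "t \<le> T" "0 < e"
  shows "dt_pairing t \<le> e * dissipation t
    + (\<integral>\<tau>. indicator {0<..<t} \<tau> * Lnorm_pow 2 \<Omega> (v \<tau>) \<partial>lborel) / (4 * e)"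
proof -
  have Young: "a * b \<le> e * a\<^sup>2 + b\<^sup>2 / (4 * e)" for a b :: real
  proof -
    have "0 \<le> (2 * e * a - b)\<^sup>2 / (4 * e)"
      using assms(3) by simp
    also have "\<dots> = e * a\<^sup>2 + b\<^sup>2 / (4 * e) - a * b"
      using assms(3) by (simp add: power2_eq_square field_simps)
    finally show ?thesis by simp
  qed
  have "dt_pairing t \<le> (\<integral>z. e * (indicator (cylinder t) z * (w (fst z) (snd z))\<^sup>2)
      + indicator (cylinder t) z * (v (fst z) (snd z))\<^sup>2 / (4 * e) \<partial>lborel_tx)"
    unfolding dt_pairing_def
    using integrable_w_mult_v[OF assms(2)] integrable_w_square[OF assms(2)] integrable_v_square[OF assms(2)]
    by (intro integral_mono) (auto simp: indicator_def Young)
  also have "\<dots> = e * dissipation t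
      + (\<integral>z. indicator (cylinder t) z * (v (fst z) (snd z))\<^sup>2 \<partial>lborel_tx) / (4 * e)"
    using integrable_w_square[OF assms(2)] integrable_v_square[OF assms(2)]
    by (simp add: dissipation_def set_lebesgue_integral_def)
  also have "(\<integral>z. indicator (cylinder t) z * (v (fst z) (snd z))\<^sup>2 \<partial>lborel_tx)
      = (\<integral>\<tau>. indicator {0<..<t} \<tau> * Lnorm_pow 2 \<Omega> (v \<tau>) \<partial>lborel)"
    by (rule cylinder_integral_eq_time_integral(2)[OF integrable_v_square[OF assms(2)]])
      (simp add: Lnorm_pow_two)
  finally show ?thesis .
qed

(* The version of v that is absolutely continuous in time. *)
definition v_integral_form :: "real \<Rightarrow> 'a \<Rightarrow> real" where
  "v_integral_form \<tau> x = v0 x + (\<integral>\<sigma>. indicator {0<..<\<tau>} \<sigma> * w \<sigma> x \<partial>lborel)"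

lemma v_integral_form_measurable [measurable (raw)]:
  "f \<in> borel_measurable M \<Longrightarrow> g \<in> borel_measurable M \<Longrightarrow>
    (\<lambda>x. v_integral_form (f x) (g x)) \<in> borel_measurable M"
proof -
  have "(\<lambda>z. v_integral_form (fst z) (snd z)) \<in> borel_measurable lborel_tx"
    unfolding v_integral_form_def indicator_def greaterThanLessThan_iff of_bool_def by measurable
  then show "f \<in> borel_measurable M \<Longrightarrow> g \<in> borel_measurable M \<Longrightarrow>
      (\<lambda>x. v_integral_form (f x) (g x)) \<in> borel_measurable M"
    by (rule measurable_uncurry_compose)
qed

lemma v_eq_integral_form:
  "\<tau> \<in> {0..<T} \<Longrightarrow> AE x in lborel. x \<in> \<Omega> \<longrightarrow> v \<tau> x = v_integral_form \<tau> x"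
  using v_eq_v0_plus_integral_w[of \<tau>]
  by (simp add: v_integral_form_def interval_lebesgue_integral_le_eq zero_ereal_def
      set_lebesgue_integral_def)

lemma AE_v_eq_integral_form_in_time:
  "AE x in lborel. x \<in> \<Omega> \<longrightarrow> (AE \<tau> in lborel. \<tau> \<in> {0<..<T} \<longrightarrow> v \<tau> x = v_integral_form \<tau> x)"
proof -
  let ?P = "\<lambda>\<tau> x. \<tau> \<in> {0<..<T} \<and> x \<in> \<Omega> \<longrightarrow> v \<tau> x = v_integral_form \<tau> x"
  have P_sets: "{z \<in> space lborel_tx. ?P (fst z) (snd z)} \<in> sets lborel_tx"
    by measurable
  have "AE \<tau> in lborel. AE x in lborel. ?P \<tau> x"
  proof (rule AE_I2)
    fix \<tau> :: real
    show "AE x in lborel. ?P \<tau> x"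
      using v_eq_integral_form[of \<tau>] by (cases "\<tau> \<in> {0<..<T}") (auto elim: eventually_mono)
  qed
  then have "AE x in lborel. AE \<tau> in lborel. ?P \<tau> x"
    using lborel_pair.AE_commute[OF P_sets] by simp
  then show ?thesis
    by (rule eventually_mono) (auto elim: eventually_mono)
qed

lemma AE_integrable_w_in_time:
  "AE x in lborel. x \<in> \<Omega> \<longrightarrow> integrable lborel (\<lambda>\<tau>. indicator {0<..<T} \<tau> * w \<tau> x)"
proof -
  define f where "f z = ennreal ((w (fst z) (snd z))\<^sup>2) * indicator (cylinder T) z" for z
  have [measurable]: "f \<in> borel_measurable lborel_tx"
    unfolding f_def by measurable
  have "(\<integral>\<^sup>+ x. (\<integral>\<^sup>+ \<tau>. f (\<tau>, x) \<partial>lborel) \<partial>lborel) = integral\<^sup>N lborel_tx f"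
    by (rule lborel_pair.nn_integral_snd) measurable
  also have "\<dots> < \<infinity>"
    using w_square_finite unfolding f_def by simp
  finally have "AE x in lborel. (\<integral>\<^sup>+ \<tau>. f (\<tau>, x) \<partial>lborel) \<noteq> \<infinity>"
    by (intro nn_integral_PInf_AE) auto
  then show ?thesis
  proof (rule eventually_mono, intro impI)
    fix x assume fin: "(\<integral>\<^sup>+ \<tau>. f (\<tau>, x) \<partial>lborel) \<noteq> \<infinity>" and "x \<in> \<Omega>"
    then have "(\<integral>\<^sup>+\<tau>. ennreal ((w \<tau> x)\<^sup>2) * indicator {0<..<T} \<tau> \<partial>lborel) < \<infinity>"
      by (simp add: f_def indicator_times less_top)
    then show "integrable lborel (\<lambda>\<tau>. indicator {0<..<T} \<tau> * w \<tau> x)"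
      using emeasure_bounded_finite[of "{0<..<T}"]
      by (intro integrable_indicator_if_square_finite) auto
  qed
qed

lemma integral_w_mult_v_slice:
  assumes "x \<in> \<Omega>" "0 < t" "t \<le> T"
    and v_eq: "AE \<tau> in lborel. \<tau> \<in> {0<..<T} \<longrightarrow> v \<tau> x = v_integral_form \<tau> x"
    and w_int: "integrable lborel (\<lambda>\<tau>. indicator {0<..<T} \<tau> * w \<tau> x)"
  shows "(\<integral>\<tau>. indicator (cylinder t) (\<tau>, x) * (w \<tau> x * v \<tau> x) \<partial>lborel)
    = ((v_integral_form t x)\<^sup>2 - (v0 x)\<^sup>2) / 2"
proof -
  define I where "I \<tau> = (\<integral>\<sigma>. indicator {0<..<\<tau>} \<sigma> * w \<sigma> x \<partial>lborel)" for \<tau>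
  have I_eq: "v_integral_form \<tau> x = v0 x + I \<tau>" for \<tau>
    by (simp add: v_integral_form_def I_def)
  have [measurable]: "I \<in> borel_measurable lborel"
  proof -
    have "(\<lambda>\<tau>. v_integral_form \<tau> x - v0 x) \<in> borel_measurable lborel"
      by measurable
    then show ?thesis
      by (simp add: I_eq)
  qed
  have w_int_t: "integrable lborel (\<lambda>\<tau>. indicator {0<..<t} \<tau> * w \<tau> x)"
    by (rule Bochner_Integration.integrable_bound[OF w_int])
      (use assms(3) in \<open>auto split: split_indicator\<close>)
  note primitive = lborel_integral_mult_primitive[OF w_int_t, folded I_def]
  have "(\<integral>\<tau>. indicator (cylinder t) (\<tau>, x) * (w \<tau> x * v \<tau> x) \<partial>lborel)
      = (\<integral>\<tau>. v0 x * (indicator {0<..<t} \<tau> * w \<tau> x) + indicator {0<..<t} \<tau> * (w \<tau> x * I \<tau>) \<partial>lborel)"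
  proof (rule integral_cong_AE)
    show "AE \<tau> in lborel. indicator (cylinder t) (\<tau>, x) * (w \<tau> x * v \<tau> x)
        = v0 x * (indicator {0<..<t} \<tau> * w \<tau> x) + indicator {0<..<t} \<tau> * (w \<tau> x * I \<tau>)"
      using v_eq
    proof (rule eventually_mono)
      fix \<tau> assume "\<tau> \<in> {0<..<T} \<longrightarrow> v \<tau> x = v_integral_form \<tau> x"
      then show "indicator (cylinder t) (\<tau>, x) * (w \<tau> x * v \<tau> x)
          = v0 x * (indicator {0<..<t} \<tau> * w \<tau> x) + indicator {0<..<t} \<tau> * (w \<tau> x * I \<tau>)"
        using assms(1,3) by (auto simp: I_eq indicator_def algebra_simps)
    qed
  qed measurable
  also have "\<dots> = v0 x * I t + (I t)\<^sup>2 / 2"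
    using w_int_t primitive by (simp add: I_def)
  finally show ?thesis
    by (simp add: I_eq power2_eq_square algebra_simps)
qed

lemma integrable_v0_square: "integrable lborel (\<lambda>x. indicator \<Omega> x * (v0 x)\<^sup>2)"
proof -
  obtain M where M: "AE x in lborel. \<bar>v0 x\<bar> \<le> M"
    using v0_bounded by blast
  show ?thesis
  proof (rule integrableI_bounded_set[where A=\<Omega> and B="M\<^sup>2"])
    show "AE x in lborel. x \<in> \<Omega> \<longrightarrow> norm (indicator \<Omega> x * (v0 x)\<^sup>2) \<le> M\<^sup>2"
      using M
    proof (rule eventually_mono, intro impI)
      fix x assume "\<bar>v0 x\<bar> \<le> M" "x \<in> \<Omega>"
      then have "\<bar>v0 x\<bar>\<^sup>2 \<le> M\<^sup>2"
        by (intro power_mono) auto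
      then show "norm (indicator \<Omega> x * (v0 x)\<^sup>2) \<le> M\<^sup>2"
        using \<open>x \<in> \<Omega>\<close> by simp
    qed
  qed (use emeasure_bounded_finite[OF bounded_domain] domain_sets in auto)
qed

lemma dt_pairing_eq_half_L2_increment:
  assumes "0 < t" "t < T"
  shows "dt_pairing t = (Lnorm_pow 2 \<Omega> (v t) - Lnorm_pow 2 \<Omega> v0) / 2"
proof -
  define F where "F \<tau> x = indicator (cylinder t) (\<tau>, x) * (w \<tau> x * v \<tau> x)" for \<tau> x
  have F_int: "integrable lborel_tx (case_prod F)"
    using integrable_w_mult_v[of t] assms by (simp add: F_def split_beta')
  define D where "D x = indicator \<Omega> x * (((v t x)\<^sup>2 - (v0 x)\<^sup>2) / 2)" for x
  have "t \<in> {0..<T}"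
    using assms by simp
  have slice: "AE x in lborel. (\<integral>\<tau>. F \<tau> x \<partial>lborel) = D x"
    using AE_v_eq_integral_form_in_time AE_integrable_w_in_time v_eq_integral_form[OF \<open>t \<in> {0..<T}\<close>]
  proof eventually_elim
    case (elim x)
    show ?case
    proof (cases "x \<in> \<Omega>")
      case True
      then show ?thesis
        using integral_w_mult_v_slice[OF True assms(1)] elim assms by (simp add: F_def D_def)
    qed (simp add: F_def D_def indicator_times)
  qed
  have D_meas: "D \<in> borel_measurable lborel"
    unfolding D_def by measurable
  have D_int: "integrable lborel D"
    by (rule integrable_cong_AE_imp[OF lborel_pair.integrable_snd[OF F_int] D_meas slice])
  have "dt_pairing t = (\<integral>x. (\<integral>\<tau>. F \<tau> x \<partial>lborel) \<partial>lborel)"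
    unfolding dt_pairing_def using lborel_pair.integral_snd[OF F_int] by (simp add: F_def split_beta')
  also have "\<dots> = (\<integral>x. D x \<partial>lborel)"
    using slice lborel_pair.integrable_snd[OF F_int] D_meas by (intro integral_cong_AE) auto
  also have "\<dots> = ((\<integral>x. indicator \<Omega> x * (v t x)\<^sup>2 \<partial>lborel) - (\<integral>x. indicator \<Omega> x * (v0 x)\<^sup>2 \<partial>lborel)) / 2"
  proof -
    have "(\<lambda>x. indicator \<Omega> x * (v t x)\<^sup>2) = (\<lambda>x. 2 * D x + indicator \<Omega> x * (v0 x)\<^sup>2)"
      by (auto simp: D_def fun_eq_iff indicator_def)
    then have "integrable lborel (\<lambda>x. indicator \<Omega> x * (v t x)\<^sup>2)"
      using D_int integrable_v0_square by simp
    moreover have "D = (\<lambda>x. (indicator \<Omega> x * (v t x)\<^sup>2 - indicator \<Omega> x * (v0 x)\<^sup>2) / 2)"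
      by (auto simp: D_def fun_eq_iff indicator_def)
    ultimately show ?thesis
      using integrable_v0_square by simp
  qed
  finally show ?thesis
    by (simp add: Lnorm_pow_two)
qed

lemma L2_mass_initial: "Lnorm_pow 2 \<Omega> (v 0) = Lnorm_pow 2 \<Omega> v0"
proof -
  have "AE x in lborel. x \<in> \<Omega> \<longrightarrow> v 0 x = v0 x"
    using v_eq_integral_form[of 0] T_pos by (auto simp: v_integral_form_def elim!: eventually_mono)
  then have "(\<integral>x. indicator \<Omega> x * (v 0 x)\<^sup>2 \<partial>lborel) = (\<integral>x. indicator \<Omega> x * (v0 x)\<^sup>2 \<partial>lborel)"
    by (intro integral_cong_AE) (auto elim!: eventually_mono simp: indicator_def)
  then show ?thesis
    by (simp add: Lnorm_pow_two)
qed

lemma L2_mass_eq_integral_energy: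
  assumes "0 < t" "t < T"
  shows "(\<lambda>\<tau>. - p * E (v \<tau>)) integrable_on {0..t}"
    and "Lnorm_pow 2 \<Omega> (v t) = Lnorm_pow 2 \<Omega> v0 + 2 * integral {0..t} (\<lambda>\<tau>. - p * E (v \<tau>))"
proof -
  note energy = dt_pairing_eq_integral_energy[OF assms(1) less_imp_le[OF assms(2)]]
  show "(\<lambda>\<tau>. - p * E (v \<tau>)) integrable_on {0..t}"
    using lborel_integral_eq_integral_Icc(1)[OF energy(1)] .
  show "Lnorm_pow 2 \<Omega> (v t) = Lnorm_pow 2 \<Omega> v0 + 2 * integral {0..t} (\<lambda>\<tau>. - p * E (v \<tau>))"
    using dt_pairing_eq_half_L2_increment[OF assms] energy(2)
      lborel_integral_eq_integral_Icc(2)[OF energy(1)]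
    by simp
qed

lemma L2_mass_increment_le_Young:
  assumes "0 < t" "t < T" "0 < e"
  shows "(Lnorm_pow 2 \<Omega> (v t) - Lnorm_pow 2 \<Omega> v0) / 2
    \<le> e * dissipation t + integral {0..t} (\<lambda>\<tau>. Lnorm_pow 2 \<Omega> (v \<tau>)) / (4 * e)"
proof -
  have "integrable lborel (\<lambda>\<tau>. indicator {0<..<t} \<tau> * Lnorm_pow 2 \<Omega> (v \<tau>))"
    by (rule cylinder_integral_eq_time_integral(1)[OF integrable_v_square])
      (use assms in \<open>simp_all add: Lnorm_pow_two\<close>)
  then show ?thesis
    using dt_pairing_le_Young[OF assms(1) less_imp_le[OF assms(2)] assms(3)]
      dt_pairing_eq_half_L2_increment[OF assms(1,2)] lborel_integral_eq_integral_Icc(2)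
    by simp
qed

end

lemma global_sol_L2_mass_inequalities:
  fixes \<Omega> :: "'a::euclidean_space set" and v0 :: "'a \<Rightarrow> real" and v :: "real \<Rightarrow> 'a \<Rightarrow> real"
  assumes "open \<Omega>" "bounded \<Omega>" "1 < p" "v0 \<in> W0 s p \<Omega>" "\<exists>M. AE x in lborel. \<bar>v0 x\<bar> \<le> M"
    and "energy s p lam (p - 1) \<Omega> v0 < 0"
    and "global_sol s p lam (p - 1) \<Omega> v0 v"
  shows "\<exists>H. L2_mass_inequalities (\<lambda>\<tau>. - p * energy s p lam (p - 1) \<Omega> (v \<tau>))
    (\<lambda>t. Lnorm_pow 2 \<Omega> (v t)) (Lnorm_pow 2 \<Omega> v0) p (- p * energy s p lam (p - 1) \<Omega> v0) H"
proof -
  obtain w where "\<And>T. 0 < T \<Longrightarrow>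
      weak_sol s p lam (p - 1) \<Omega> T v0 v w \<and> energy_ineq s p lam (p - 1) \<Omega> T v0 v w"
    using assms(7) by (auto simp: global_sol_def)
  then have sol: "weak_solution s p lam \<Omega> T v0 v w" if "0 < T" for T
    using that assms(1-5) by unfold_locales auto
  define H where "H = weak_solution.dissipation \<Omega> w"
  have "L2_mass_inequalities (\<lambda>\<tau>. - p * energy s p lam (p - 1) \<Omega> (v \<tau>))
    (\<lambda>t. Lnorm_pow 2 \<Omega> (v t)) (Lnorm_pow 2 \<Omega> v0) p (- p * energy s p lam (p - 1) \<Omega> v0) H"
  proof unfold_locales
    show "0 < p" "0 < - p * energy s p lam (p - 1) \<Omega> v0" "0 \<le> Lnorm_pow 2 \<Omega> v0"
      using assms(3,6) by (simp_all add: Lnorm_pow_nonneg mult_pos_neg)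
  next
    fix t :: real assume "0 \<le> t"
    have "(\<lambda>\<tau>. - p * energy s p lam (p - 1) \<Omega> (v \<tau>)) integrable_on {0..t + 1}"
      using weak_solution.L2_mass_eq_integral_energy(1)[OF sol, of "t + 2" "t + 1"] \<open>0 \<le> t\<close> by simp
    then show "(\<lambda>\<tau>. - p * energy s p lam (p - 1) \<Omega> (v \<tau>)) integrable_on {0..t}"
      by (rule integrable_subinterval_real) (use \<open>0 \<le> t\<close> in auto)
  next
    fix t :: real assume "0 \<le> t"
    then show "Lnorm_pow 2 \<Omega> (v t)
        = Lnorm_pow 2 \<Omega> v0 + 2 * integral {0..t} (\<lambda>\<tau>. - p * energy s p lam (p - 1) \<Omega> (v \<tau>))"
      using weak_solution.L2_mass_eq_integral_energy(2)[OF sol, of "t + 1" t]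
        weak_solution.L2_mass_initial[OF sol, of 1]
      by (cases "t = 0") auto
  next
    fix t :: real assume "0 \<le> t"
    then show "p * H t + - p * energy s p lam (p - 1) \<Omega> v0 \<le> - p * energy s p lam (p - 1) \<Omega> (v t)"
      using weak_solution.energy_rate_ge_dissipation[OF sol, of "t + 1" t] by (simp add: H_def)
  next
    show "0 \<le> H t" for t
      using weak_solution.dissipation_nonneg[OF sol[of 1]] by (simp add: H_def)
  next
    fix t e :: real assume "0 < t" "0 < e"
    then show "(Lnorm_pow 2 \<Omega> (v t) - Lnorm_pow 2 \<Omega> v0) / 2
        \<le> e * H t + integral {0..t} (\<lambda>\<tau>. Lnorm_pow 2 \<Omega> (v \<tau>)) / (4 * e)"
      using weak_solution.L2_mass_increment_le_Young[OF sol, of "t + 1" t e] by (simp add: H_def)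
  qed
  then show ?thesis
    by blast
qed

theorem lemma3p9:
  fixes \<Omega> :: "'a::euclidean_space set"
    and s p lam :: real
    and v0 :: "'a \<Rightarrow> real"
    and v :: "real \<Rightarrow> 'a \<Rightarrow> real"
  assumes "DIM('a) \<ge> 2"
    and "C11_domain \<Omega>"
    and "0 < s" and "s < 1" and "1 < p"
    and "lam > lambda1 s p \<Omega>"
    and "v0 \<in> W0 s p \<Omega>"
    and "\<exists>M. AE x in lborel. \<bar>v0 x\<bar> \<le> M"
    and "AE x in lborel. v0 x \<ge> 0"
    and "\<not> (AE x in lborel. v0 x = 0)"
    and "energy s p lam (p - 1) \<Omega> v0 < 0"
  shows "(p \<le> 2 \<longrightarrow> global_sol s p lam (p - 1) \<Omega> v0 v \<longrightarrow>
            filterlim (\<lambda>t. sqrt (Lnorm_pow 2 \<Omega> (v t))) at_top at_top)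
       \<and> (p > 2 \<longrightarrow> \<not> global_sol s p lam (p - 1) \<Omega> v0 v)"
proof -
  (* Only openness and boundedness of Omega, measurability and boundedness of v0 and E(v0) < 0
     are used; lam > lambda1 is what makes E(v0) < 0 possible in the first place. *)
  have "open \<Omega>" "bounded \<Omega>"
    using assms(2) by (simp_all add: C11_domain_def)
  note L2_mass = global_sol_L2_mass_inequalities[OF this assms(5,7,8,11)]
  show ?thesis
  proof (intro conjI impI notI)
    assume "global_sol s p lam (p - 1) \<Omega> v0 v"
    then show "filterlim (\<lambda>t. sqrt (Lnorm_pow 2 \<Omega> (v t))) at_top at_top"
      using L2_mass L2_mass_inequalities.sqrt_y_tendsto_at_top by blast
  next
    assume "2 < p" "global_sol s p lam (p - 1) \<Omega> v0 v"
    then show False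
      using L2_mass L2_mass_inequalities.no_global_solution_if_gt_2 by blast
  qed
qed

end
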